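(* Let $n\ge m\ge 2$ and let $\bm L\in\mathbb{R}^{m\times m}$ be the lower triangular matrix \[ L_{ij}=\begin{cases}\sqrt{\dfrac{m-i}{m-i+1}}, & i=j<m,\\[1ex] -\dfrac{1}{\sqrt{(m-j+1)(m-j)}}, & 1\le j<i\le m,\\[1ex] 0, & \text{otherwise}.\end{cases} \] Then \[ \widetilde{\mathcal O}_{m,n}=\left\{\bm L\bm Q+\frac{1}{\sqrt{mn}}\bm J_{m\times n}\ :\ \bm Q\in\mathbb{R}^{m\times n},\ \bm Q\bm Q^T=\bm I_m,\ \bm Q^T\bm e_m=\bm\xi_n\right\}, \] i.e. the set of matrices of this form where $\bm Q$ has orthonormal rows and last row equal to $\bm\xi_n^T$.
   Context: $\bm 1_k$ denotes the all-ones vector in $\mathbb{R}^k$, $\bm\xi_k=\frac{1}{\sqrt k}\bm 1_k$, $\bm J_{m\times n}$ is the $m\times n$ all-ones matrix, and $\bm e_m$ is the $m$-th standard basis vector of $\mathbb{R}^m$. $\widetilde{\mathcal O}_{m,n}:=\{\bm W\in\mathbb{R}^{m\times n}: \bm W\bm W^T=\bm I_m,\ \bm\xi_m^T\bm W\bm\xi_n=1\}$ (the set of semi-orthogonal $m\times n$ matrices maximizing the sum of all entries). The matrix $\bm L$ is the Cholesky factor of $\bm I_m-\frac1m\bm J_m$. *)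

theory Defs
  imports Complex_Main "Jordan_Normal_Form.Matrix"
begin

text \<open>Matrices are Jordan_Normal_Form matrices with 0-based indices.
  Paper index i (1..m) corresponds to index i-1 here.\<close>

definition xi_vec :: "nat \<Rightarrow> real vec" where
  "xi_vec k = vec k (\<lambda>_. 1 / sqrt (real k))"

definition J_mat :: "nat \<Rightarrow> nat \<Rightarrow> real mat" where
  "J_mat m n = mat m n (\<lambda>_. 1)"

definition O_tilde :: "nat \<Rightarrow> nat \<Rightarrow> real mat set" where
  "O_tilde m n = {W. W \<in> carrier_mat m n \<and> W * transpose_mat W = 1\<^sub>m m
      \<and> xi_vec m \<bullet> (W *\<^sub>v xi_vec n) = 1}"

definition L_mat :: "nat \<Rightarrow> real mat" where
  "L_mat m = mat m m (\<lambda>(i, j).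
      if i = j \<and> i + 1 < m then sqrt ((real m - real i - 1) / (real m - real i))
      else if j < i then - 1 / sqrt ((real m - real j) * (real m - real j - 1))
      else 0)"

end

theory Submission
  imports Defs "Jordan_Normal_Form.Determinant"
begin

(* The last column of L is zero and L L^T = I - J/m, so putting xi_m into that column gives an
   orthogonal matrix A with A e_m = xi_m, and A Q = L Q + J / sqrt (m n) whenever the last row of Q
   is xi_n^T.  Left multiplication by A permutes the matrices with orthonormal rows and turns the
   condition Q^T e_m = xi_n into W^T xi_m = xi_n.  For W with orthonormal rows, W^T xi_m is a unit
   vector, so xi_m^T W xi_n = 1 is the equality case of Cauchy-Schwarz, i.e. W^T xi_m = xi_n. *)

lemma vec_eq_if_unit_inner_one:
  fixes u v :: "real vec"
  assumes u: "u \<in> carrier_vec n" and v: "v \<in> carrier_vec n"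
    and "u \<bullet> u = 1" and "v \<bullet> v = 1" and "u \<bullet> v = 1"
  shows "u = v"
proof -
  have "(u - v) \<bullet> (u - v) = u \<bullet> u - 2 * (u \<bullet> v) + v \<bullet> v"
    using u v by (simp add: minus_scalar_prod_distrib scalar_prod_minus_distrib comm_scalar_prod[of v n u])
  also have "\<dots> = 0" using assms by simp
  finally have "u - v = 0\<^sub>v n"
    using conjugate_square_eq_0_vec[of "u - v" n] u v by simp
  then show ?thesis using u v by (auto simp: vec_eq_iff)
qed

lemma xi_vec_carrier: "xi_vec k \<in> carrier_vec k"
  by (simp add: xi_vec_def)

lemma xi_vec_inner_self: "0 < k \<Longrightarrow> xi_vec k \<bullet> xi_vec k = 1"
  by (simp add: xi_vec_def scalar_prod_def)

lemma transpose_mult_vec_inner_self: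
  fixes W :: "'a :: comm_ring_1 mat"
  assumes W: "W \<in> carrier_mat m n" and WWT: "W * transpose_mat W = 1\<^sub>m m"
    and x: "x \<in> carrier_vec m"
  shows "(transpose_mat W *\<^sub>v x) \<bullet> (transpose_mat W *\<^sub>v x) = x \<bullet> x"
proof -
  have "(transpose_mat W *\<^sub>v x) \<bullet> (transpose_mat W *\<^sub>v x) = x \<bullet> ((W * transpose_mat W) *\<^sub>v x)"
    using W x by (simp add: transpose_vec_mult_scalar)
  then show ?thesis using WWT x by simp
qed

lemma O_tilde_iff:
  assumes "0 < m" and "0 < n"
  shows "W \<in> O_tilde m n \<longleftrightarrow>
    W \<in> carrier_mat m n \<and> W * transpose_mat W = 1\<^sub>m m \<and> transpose_mat W *\<^sub>v xi_vec m = xi_vec n"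
proof -
  have inner_transpose: "xi_vec m \<bullet> (W *\<^sub>v xi_vec n) = (transpose_mat W *\<^sub>v xi_vec m) \<bullet> xi_vec n"
    if "W \<in> carrier_mat m n" using that by (simp add: transpose_vec_mult_scalar xi_vec_carrier)
  have "transpose_mat W *\<^sub>v xi_vec m = xi_vec n"
    if W: "W \<in> carrier_mat m n" and WWT: "W * transpose_mat W = 1\<^sub>m m"
      and "xi_vec m \<bullet> (W *\<^sub>v xi_vec n) = 1"
    using W that(3) assms
    by (intro vec_eq_if_unit_inner_one[where n = n])
      (auto simp: inner_transpose transpose_mult_vec_inner_self[OF W WWT] xi_vec_carrier xi_vec_inner_self)
  then show ?thesis
    using assms by (auto simp: O_tilde_def inner_transpose xi_vec_inner_self)
qed

lemma rows_orthonormal_mult: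
  fixes A :: "'a :: comm_ring_1 mat"
  assumes A: "A \<in> carrier_mat k m" and B: "B \<in> carrier_mat m n"
    and AAT: "A * transpose_mat A = 1\<^sub>m k" and BBT: "B * transpose_mat B = 1\<^sub>m m"
  shows "(A * B) * transpose_mat (A * B) = 1\<^sub>m k"
proof -
  have BT: "transpose_mat B \<in> carrier_mat n m" and AT: "transpose_mat A \<in> carrier_mat m k"
    using A B by auto
  have "(A * B) * transpose_mat (A * B) = (A * B) * (transpose_mat B * transpose_mat A)"
    using A B by (simp add: transpose_mult)
  also have "\<dots> = A * ((B * transpose_mat B) * transpose_mat A)"
    using assoc_mult_mat[OF A B mult_carrier_mat[OF BT AT]] assoc_mult_mat[OF B BT AT] by simp
  also have "\<dots> = 1\<^sub>m k" using AT AAT BBT by simp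
  finally show ?thesis .
qed

lemma orthogonal_mult_image_rows_orthonormal:
  fixes A :: "'a :: field mat"
  assumes A: "A \<in> carrier_mat m m" and AAT: "A * transpose_mat A = 1\<^sub>m m"
    and e: "e \<in> carrier_vec m" and Ae: "A *\<^sub>v e = x"
  shows "{W. W \<in> carrier_mat m n \<and> W * transpose_mat W = 1\<^sub>m m \<and> transpose_mat W *\<^sub>v x = y}
    = (\<lambda>Q. A * Q) ` {Q. Q \<in> carrier_mat m n \<and> Q * transpose_mat Q = 1\<^sub>m m \<and> transpose_mat Q *\<^sub>v e = y}"
    (is "?Ws = (\<lambda>Q. A * Q) ` ?Qs")
proof -
  have AT: "transpose_mat A \<in> carrier_mat m m" using A by simp
  have x: "x \<in> carrier_vec m" using A e Ae by auto
  have ATA: "transpose_mat A * A = 1\<^sub>m m"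
    using mat_mult_left_right_inverse[OF A AT AAT] .
  have ATx: "transpose_mat A *\<^sub>v x = e"
    using Ae e A by (auto simp flip: assoc_mult_mat_vec simp: ATA)
  show ?thesis
  proof (intro equalityI subsetI)
    fix W assume "W \<in> ?Ws"
    then have W: "W \<in> carrier_mat m n" and WWT: "W * transpose_mat W = 1\<^sub>m m"
      and Wx: "transpose_mat W *\<^sub>v x = y" by auto
    have "transpose_mat (transpose_mat A * W) *\<^sub>v e = transpose_mat W *\<^sub>v (A *\<^sub>v e)"
      using A W e by (simp add: transpose_mult assoc_mult_mat_vec[of _ n m A m])
    then have "transpose_mat A * W \<in> ?Qs"
      using rows_orthonormal_mult[OF AT W _ WWT] AT W ATA Ae Wx by simp
    moreover have "W = A * (transpose_mat A * W)"
      using A W AAT by (simp flip: assoc_mult_mat[OF A AT W])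
    ultimately show "W \<in> (\<lambda>Q. A * Q) ` ?Qs" by blast
  next
    fix W assume "W \<in> (\<lambda>Q. A * Q) ` ?Qs"
    then obtain Q where W: "W = A * Q" and Q: "Q \<in> carrier_mat m n"
      and QQT: "Q * transpose_mat Q = 1\<^sub>m m" and Qe: "transpose_mat Q *\<^sub>v e = y" by auto
    have "transpose_mat W *\<^sub>v x = transpose_mat Q *\<^sub>v (transpose_mat A *\<^sub>v x)"
      using A Q x by (simp add: W transpose_mult assoc_mult_mat_vec[of _ n m _ m])
    then show "W \<in> ?Ws"
      using rows_orthonormal_mult[OF A Q AAT QQT] A Q Qe ATx by (simp add: W)
  qed
qed

lemma sum_inverse_consecutive_products:
  fixes x :: real
  assumes "real i < x"
  shows "(\<Sum>j<i. 1 / ((x - real j) * (x - real j - 1))) = 1 / (x - i) - 1 / x"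
proof -
  have "1 / ((x - j) * (x - j - 1)) = 1 / (x - Suc j) - 1 / (x - j)" if "j < i" for j
    using that assms by (simp add: field_simps)
  then have "(\<Sum>j<i. 1 / ((x - j) * (x - j - 1))) = (\<Sum>j<i. 1 / (x - Suc j) - 1 / (x - j))"
    by simp
  also have "\<dots> = 1 / (x - i) - 1 / x" by (subst sum_lessThan_telescope) simp
  finally show ?thesis .
qed

(* Unlike L_mat_def, no case distinction at i = j = m - 1: the diagonal formula gives 0 there too. *)
lemma L_mat_entry:
  assumes "i < m" and "j < m"
  shows "L_mat m $$ (i, j) =
    (if j < i then - 1 / sqrt ((real m - real j) * (real m - real j - 1))
     else if i = j then sqrt ((real m - real i - 1) / (real m - real i)) else 0)"
  using assms by (auto simp: L_mat_def of_nat_diff)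

lemma L_mat_row_inner:
  assumes ik: "i \<le> k" and km: "k < m"
  shows "(\<Sum>j<m. L_mat m $$ (i, j) * L_mat m $$ (k, j)) = (if i = k then 1 else 0) - 1 / real m"
proof -
  let ?l = "\<lambda>j. L_mat m $$ (i, j) * L_mat m $$ (k, j)"
  have pos: "real m - real i > 0" using ik km by simp
  have "(\<Sum>j<m. ?l j) = (\<Sum>j<Suc i. ?l j)"
    using ik km by (intro sum.mono_neutral_right) (auto simp: L_mat_entry)
  also have "\<dots> = (\<Sum>j<i. 1 / ((real m - real j) * (real m - real j - 1))) + ?l i"
    using ik km by (auto simp: L_mat_entry intro!: sum.cong)
  also have "(\<Sum>j<i. 1 / ((real m - real j) * (real m - real j - 1))) = 1 / (real m - real i) - 1 / real m"
    using ik km by (intro sum_inverse_consecutive_products) simp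
  also have "?l i = (if i = k then (real m - real i - 1) / (real m - real i) else - 1 / (real m - real i))"
  proof -
    have "sqrt (b / a) * (- 1 / sqrt (a * b)) = - 1 / a" if "0 < a" "0 < b" for a b :: real
      using that by (simp add: real_sqrt_divide real_sqrt_mult)
    then show ?thesis using ik km pos by (auto simp: L_mat_entry)
  qed
  also have "1 / (real m - real i) - 1 / real m + \<dots> = (if i = k then 1 else 0) - 1 / real m"
    using pos by (simp add: diff_divide_distrib)
  finally show ?thesis .
qed

lemma L_mat_mult_transpose:
  "L_mat m * transpose_mat (L_mat m) = 1\<^sub>m m - (1 / real m) \<cdot>\<^sub>m J_mat m m"
proof (rule eq_matI)
  fix i k assume "i < dim_row (1\<^sub>m m - (1 / real m) \<cdot>\<^sub>m J_mat m m)"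
    and "k < dim_col (1\<^sub>m m - (1 / real m) \<cdot>\<^sub>m J_mat m m)"
  then have i: "i < m" and k: "k < m" by (auto simp: J_mat_def)
  have "(L_mat m * transpose_mat (L_mat m)) $$ (i, k) = (\<Sum>j<m. L_mat m $$ (i, j) * L_mat m $$ (k, j))"
    using i k by (simp add: L_mat_def scalar_prod_def lessThan_atLeast0)
  also have "\<dots> = (if i = k then 1 else 0) - 1 / real m"
    using L_mat_row_inner[OF _ i, of k] L_mat_row_inner[OF _ k, of i] i k
    by (cases "i \<le> k") (auto simp: mult.commute)
  finally show "(L_mat m * transpose_mat (L_mat m)) $$ (i, k) = (1\<^sub>m m - (1 / real m) \<cdot>\<^sub>m J_mat m m) $$ (i, k)"
    using i k by (simp add: J_mat_def)
qed (auto simp: L_mat_def J_mat_def)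

lemma L_mat_last_col: "i < m \<Longrightarrow> L_mat m $$ (i, m - 1) = 0"
  by (simp add: L_mat_def)

definition L_completion :: "nat \<Rightarrow> real mat" where
  "L_completion m = mat m m (\<lambda>(i, j). L_mat m $$ (i, j) + (if j = m - 1 then 1 / sqrt (real m) else 0))"

lemma L_completion_carrier: "L_completion m \<in> carrier_mat m m"
  by (simp add: L_completion_def)

lemma L_completion_orthogonal:
  assumes "0 < m"
  shows "L_completion m * transpose_mat (L_completion m) = 1\<^sub>m m"
proof (rule eq_matI)
  fix i k assume "i < dim_row (1\<^sub>m m :: real mat)" and "k < dim_col (1\<^sub>m m :: real mat)"
  then have i: "i < m" and k: "k < m" by auto
  let ?L = "L_mat m" and ?d = "\<lambda>j. if j = m - 1 then 1 / sqrt (real m) else 0"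
  have "(L_completion m * transpose_mat (L_completion m)) $$ (i, k)
      = (\<Sum>j<m. (?L $$ (i, j) + ?d j) * (?L $$ (k, j) + ?d j))"
    using i k by (simp add: L_completion_def scalar_prod_def lessThan_atLeast0)
  also have "\<dots> = (\<Sum>j<m. ?L $$ (i, j) * ?L $$ (k, j) + (if j = m - 1 then 1 / real m else 0))"
    using L_mat_last_col[OF i] L_mat_last_col[OF k] by (auto simp: algebra_simps intro!: sum.cong)
  also have "\<dots> = (?L * transpose_mat ?L) $$ (i, k) + 1 / real m"
    using i k assms by (simp add: sum.distrib L_mat_def scalar_prod_def lessThan_atLeast0)
  also have "\<dots> = 1\<^sub>m m $$ (i, k)"
    using i k by (simp add: L_mat_mult_transpose J_mat_def)
  finally show "(L_completion m * transpose_mat (L_completion m)) $$ (i, k) = 1\<^sub>m m $$ (i, k)" .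
qed (auto simp: L_completion_def)

lemma L_completion_mult_unit_last:
  "0 < m \<Longrightarrow> L_completion m *\<^sub>v unit_vec m (m - 1) = xi_vec m"
  by (intro eq_vecI) (auto simp: L_completion_def xi_vec_def L_mat_def)

lemma L_completion_mult:
  assumes Q: "Q \<in> carrier_mat m n" and m: "0 < m"
    and Q_last: "transpose_mat Q *\<^sub>v unit_vec m (m - 1) = xi_vec n"
  shows "L_completion m * Q = L_mat m * Q + (1 / sqrt (real m * real n)) \<cdot>\<^sub>m J_mat m n"
proof (rule eq_matI)
  fix i l assume "i < dim_row (L_mat m * Q + (1 / sqrt (real m * real n)) \<cdot>\<^sub>m J_mat m n)"
    and "l < dim_col (L_mat m * Q + (1 / sqrt (real m * real n)) \<cdot>\<^sub>m J_mat m n)"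
  then have i: "i < m" and l: "l < n" by (auto simp: J_mat_def)
  have "Q $$ (m - 1, l) = (transpose_mat Q *\<^sub>v unit_vec m (m - 1)) $ l"
    using Q l m by simp
  then have Q_entry: "Q $$ (m - 1, l) = 1 / sqrt (real n)"
    using l Q_last by (simp add: xi_vec_def)
  have "(L_completion m * Q) $$ (i, l)
      = (\<Sum>j<m. L_mat m $$ (i, j) * Q $$ (j, l) + (if j = m - 1 then Q $$ (m - 1, l) / sqrt (real m) else 0))"
    using i l Q by (auto simp: L_completion_def scalar_prod_def lessThan_atLeast0 algebra_simps intro!: sum.cong)
  also have "\<dots> = (L_mat m * Q) $$ (i, l) + 1 / sqrt (real m * real n)"
    using i l Q m Q_entry by (simp add: sum.distrib L_mat_def scalar_prod_def lessThan_atLeast0 real_sqrt_mult)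
  finally show "(L_completion m * Q) $$ (i, l) = (L_mat m * Q + (1 / sqrt (real m * real n)) \<cdot>\<^sub>m J_mat m n) $$ (i, l)"
    using i l Q by (simp add: J_mat_def L_mat_def)
qed (use Q in \<open>auto simp: L_completion_def L_mat_def J_mat_def\<close>)

theorem theorem2:
  fixes m n :: nat
  assumes "2 \<le> m" and "m \<le> n"
  shows "O_tilde m n =
    {L_mat m * Q + (1 / sqrt (real m * real n)) \<cdot>\<^sub>m J_mat m n | Q.
       Q \<in> carrier_mat m n \<and> Q * transpose_mat Q = 1\<^sub>m m
       \<and> transpose_mat Q *\<^sub>v unit_vec m (m - 1) = xi_vec n}"
proof -
  have m: "0 < m" and n: "0 < n" using assms by auto
  let ?Qs = "{Q. Q \<in> carrier_mat m n \<and> Q * transpose_mat Q = 1\<^sub>m m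
    \<and> transpose_mat Q *\<^sub>v unit_vec m (m - 1) = xi_vec n}"
  have "O_tilde m n = {W. W \<in> carrier_mat m n \<and> W * transpose_mat W = 1\<^sub>m m
      \<and> transpose_mat W *\<^sub>v xi_vec m = xi_vec n}"
    using O_tilde_iff[OF m n] by blast
  also have "\<dots> = (\<lambda>Q. L_completion m * Q) ` ?Qs"
    using m by (intro orthogonal_mult_image_rows_orthonormal L_completion_carrier
        L_completion_orthogonal L_completion_mult_unit_last) simp_all
  also have "\<dots> = (\<lambda>Q. L_mat m * Q + (1 / sqrt (real m * real n)) \<cdot>\<^sub>m J_mat m n) ` ?Qs"
    using m by (intro image_cong) (auto simp: L_completion_mult)
  finally show ?thesis by (simp only: setcompr_eq_image)
qed

end
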